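(* Let $G,H$ be groups, $\tau\in\mathrm{CA}(A^G)$, $\phi\in\mathrm{Hom}(H,G)$, and suppose $\mathcal{T}:=\phi^*\circ\tau$ is non-constant. If $\psi\in\mathrm{Hom}(H,G)$ is such that the difference set $\Delta(\phi,\psi)$ is infinite, then $\mathcal{T}\neq\psi^*\circ\tau$.
   Context: $A$ is a finite set with $|A|\ge 2$. $A^G$ is the set of functions $G\to A$ with shift action $(g\cdot x)(k):=x(g^{-1}k)$. $\mathrm{CA}(A^G)$ is the set of maps $\tau:A^G\to A^G$ for which there exist finite $T\subseteq G$ and $\mu:A^T\to A$ with $\tau(x)(g)=\mu((g^{-1}\cdot x)|_T)$ for all $x,g$. For $\phi\in\mathrm{Hom}(H,G)$, $\phi^*:A^G\to A^H$ is $\phi^*(x):=x\circ\phi$. For $\phi,\psi\in\mathrm{Hom}(H,G)$, $\Delta(\phi,\psi):=\{\psi(h)^{-1}\phi(h):h\in H\}\subseteq G$. *)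

theory Defs
  imports "HOL-Algebra.Group" "HOL-Library.FuncSet"
begin

definition config :: "('g, 'm) monoid_scheme \<Rightarrow> 'a set \<Rightarrow> ('g \<Rightarrow> 'a) set" where
  "config G A = (carrier G \<rightarrow>\<^sub>E A)"

definition shift :: "('g, 'm) monoid_scheme \<Rightarrow> 'g \<Rightarrow> ('g \<Rightarrow> 'a) \<Rightarrow> ('g \<Rightarrow> 'a)" where
  "shift G g x = (\<lambda>k\<in>carrier G. x (inv\<^bsub>G\<^esub> g \<otimes>\<^bsub>G\<^esub> k))"

definition is_CA :: "('g, 'm) monoid_scheme \<Rightarrow> 'a set \<Rightarrow> (('g \<Rightarrow> 'a) \<Rightarrow> ('g \<Rightarrow> 'a)) \<Rightarrow> bool" where
  "is_CA G A \<tau> \<longleftrightarrow> (\<exists>T (\<mu> :: ('g \<Rightarrow> 'a) \<Rightarrow> 'a). finite T \<and> T \<subseteq> carrier G \<and>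
      \<mu> ` (T \<rightarrow>\<^sub>E A) \<subseteq> A \<and>
      (\<forall>x \<in> config G A. \<tau> x = (\<lambda>g\<in>carrier G. \<mu> (restrict (shift G (inv\<^bsub>G\<^esub> g) x) T))))"

definition pullback :: "('h, 'n) monoid_scheme \<Rightarrow> ('h \<Rightarrow> 'g) \<Rightarrow> ('g \<Rightarrow> 'a) \<Rightarrow> ('h \<Rightarrow> 'a)" where
  "pullback H \<phi> x = (\<lambda>h\<in>carrier H. x (\<phi> h))"

definition diff_set :: "('g, 'm) monoid_scheme \<Rightarrow> ('h, 'n) monoid_scheme \<Rightarrow> ('h \<Rightarrow> 'g) \<Rightarrow> ('h \<Rightarrow> 'g) \<Rightarrow> 'g set" where
  "diff_set G H \<phi> \<psi> = {inv\<^bsub>G\<^esub> (\<psi> h) \<otimes>\<^bsub>G\<^esub> \<phi> h | h. h \<in> carrier H}"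

end

theory Submission
  imports Defs "HOL-Algebra.Coset"
begin

text \<open>A cellular automaton computes \<open>\<tau> x g\<close> from the window of \<open>x\<close> on the translate \<open>g T\<close>
  of its finite memory set \<open>T\<close>. Non-constancy of \<open>\<phi>\<^sup>* \<circ> \<tau>\<close> provides two windows \<open>p\<close>, \<open>q\<close> on
  which the local rule differs. Since \<open>\<Delta>(\<phi>,\<psi>)\<close> is infinite, it contains some
  \<open>\<psi>(h)\<inverse>\<phi>(h)\<close> outside the finite set \<open>T T\<inverse>\<close>; then \<open>\<phi>(h) T\<close> and \<open>\<psi>(h) T\<close> are disjoint, so a
  single configuration shows \<open>p\<close> at \<open>\<phi>(h)\<close> and \<open>q\<close> at \<open>\<psi>(h)\<close>, and the two pullbacks differ
  at \<open>h\<close>.\<close>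

lemma (in group) is_CA_local_rule:
  assumes "is_CA G A \<tau>"
  obtains T and \<mu> :: "('a \<Rightarrow> 'c) \<Rightarrow> 'c"
  where "finite T" "T \<subseteq> carrier G"
    and "\<And>x g. x \<in> config G A \<Longrightarrow> g \<in> carrier G \<Longrightarrow> \<tau> x g = \<mu> (\<lambda>k\<in>T. x (g \<otimes> k))"
proof -
  obtain T and \<mu> :: "('a \<Rightarrow> 'c) \<Rightarrow> 'c" where T: "finite T" "T \<subseteq> carrier G"
    and \<tau>: "\<forall>x \<in> config G A. \<tau> x = (\<lambda>g\<in>carrier G. \<mu> (restrict (shift G (inv g) x) T))"
    using assms unfolding is_CA_def by blast
  have "\<tau> x g = \<mu> (\<lambda>k\<in>T. x (g \<otimes> k))" if "x \<in> config G A" "g \<in> carrier G" for x g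
  proof -
    have "restrict (shift G (inv g) x) T = (\<lambda>k\<in>T. x (g \<otimes> k))"
      using that T(2) by (auto simp: shift_def fun_eq_iff)
    then show ?thesis using \<tau> that by simp
  qed
  with T show thesis by (rule that)
qed

lemma (in group) window_in_PiE:
  assumes "x \<in> config G A" "g \<in> carrier G" "T \<subseteq> carrier G"
  shows "(\<lambda>k\<in>T. x (g \<otimes> k)) \<in> T \<rightarrow>\<^sub>E A"
  using assms by (auto simp: config_def)

lemma finite_set_mult_set_inv:
  assumes "finite T"
  shows "finite (T <#>\<^bsub>G\<^esub> set_inv\<^bsub>G\<^esub> T)"
  using assms by (simp add: set_mult_def SET_INV_def)

lemma (in group) l_cosets_disjoint:
  assumes "T \<subseteq> carrier G" "a \<in> carrier G" "b \<in> carrier G"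
    and "inv b \<otimes> a \<notin> T <#> set_inv T"
  shows "(a <# T) \<inter> (b <# T) = {}"
proof (rule ccontr)
  assume "(a <# T) \<inter> (b <# T) \<noteq> {}"
  then obtain s t where st: "s \<in> T" "t \<in> T" "a \<otimes> t = b \<otimes> s"
    by (auto simp: l_coset_def)
  with assms(1) have [simp]: "s \<in> carrier G" "t \<in> carrier G" by auto
  have "inv b \<otimes> a \<otimes> t = s"
    using st(3) assms(2,3) by (simp add: m_assoc inv_solve_left')
  then have "inv b \<otimes> a = s \<otimes> inv t"
    using assms(2,3) by (simp add: inv_solve_right)
  with st(1,2) assms(4) show False
    by (auto simp: set_mult_def SET_INV_def)
qed

lemma (in group) glue_windows:
  assumes "T \<subseteq> carrier G" "a \<in> carrier G" "b \<in> carrier G" "(a <# T) \<inter> (b <# T) = {}"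
    and "p \<in> T \<rightarrow>\<^sub>E A" "q \<in> T \<rightarrow>\<^sub>E A" "A \<noteq> {}"
  obtains x where "x \<in> config G A" "(\<lambda>k\<in>T. x (a \<otimes> k)) = p" "(\<lambda>k\<in>T. x (b \<otimes> k)) = q"
proof -
  obtain c where c: "c \<in> A" using assms(7) by blast
  define x where "x = (\<lambda>g\<in>carrier G. if g \<in> a <# T then p (inv a \<otimes> g)
      else if g \<in> b <# T then q (inv b \<otimes> g) else c)"
  have inv_in: "inv u \<otimes> g \<in> T" if "u \<in> carrier G" "g \<in> u <# T" for u g
    using that assms(1) by (auto simp: l_coset_def m_assoc[symmetric])
  have window: "(\<lambda>k\<in>T. x (u \<otimes> k)) = r"
    if "u \<in> carrier G" "r \<in> T \<rightarrow>\<^sub>E A" and x_on: "\<And>g. g \<in> u <# T \<Longrightarrow> x g = r (inv u \<otimes> g)"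
    for u r
  proof
    fix k
    show "(\<lambda>k\<in>T. x (u \<otimes> k)) k = r k"
    proof (cases "k \<in> T")
      case True
      then have "u \<otimes> k \<in> u <# T" and "k \<in> carrier G"
        using assms(1) by (auto simp: l_coset_def)
      then show ?thesis
        using True x_on that(1) by (simp add: m_assoc[symmetric])
    next
      case False
      then show ?thesis using PiE_arb[OF that(2) False] by simp
    qed
  qed
  have "x \<in> config G A"
    using PiE_mem[OF assms(5) inv_in[OF assms(2)]] PiE_mem[OF assms(6) inv_in[OF assms(3)]] c
    by (auto simp: x_def config_def)
  moreover have "(\<lambda>k\<in>T. x (a \<otimes> k)) = p"
    by (rule window[OF assms(2,5)])
      (use subsetD[OF l_coset_subset_G[OF assms(1,2)]] in \<open>simp add: x_def\<close>)
  moreover have "(\<lambda>k\<in>T. x (b \<otimes> k)) = q"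
    by (rule window[OF assms(3,6)])
      (use assms(4) subsetD[OF l_coset_subset_G[OF assms(1,3)]] in \<open>auto simp: x_def\<close>)
  ultimately show thesis by (rule that)
qed

lemma diff_set_avoids_finite:
  assumes "infinite (diff_set G H \<phi> \<psi>)" "finite S"
  obtains h where "h \<in> carrier H" "inv\<^bsub>G\<^esub> \<psi> h \<otimes>\<^bsub>G\<^esub> \<phi> h \<notin> S"
proof -
  from assms have "diff_set G H \<phi> \<psi> \<noteq> S \<inter> diff_set G H \<phi> \<psi>"
    by (metis finite_Int)
  then show thesis using that by (auto simp: diff_set_def)
qed

theorem theorem3p9:
  fixes G :: "('g, 'm) monoid_scheme" and H :: "('h, 'n) monoid_scheme"
    and A :: "'a set" and \<tau> :: "('g \<Rightarrow> 'a) \<Rightarrow> ('g \<Rightarrow> 'a)"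
    and \<phi> \<psi> :: "'h \<Rightarrow> 'g"
  assumes "group G" and "group H"
    and "finite A" and "card A \<ge> 2"
    and "is_CA G A \<tau>"
    and "\<phi> \<in> hom H G" and "\<psi> \<in> hom H G"
    and "\<exists>x \<in> config G A. \<exists>y \<in> config G A. pullback H \<phi> (\<tau> x) \<noteq> pullback H \<phi> (\<tau> y)"
    and "infinite (diff_set G H \<phi> \<psi>)"
  shows "\<exists>x \<in> config G A. pullback H \<phi> (\<tau> x) \<noteq> pullback H \<psi> (\<tau> x)"
proof -
  interpret G: group G by fact
  have \<phi>: "\<phi> h \<in> carrier G" and \<psi>: "\<psi> h \<in> carrier G" if "h \<in> carrier H" for h
    using that assms(6,7) by (auto simp: hom_def)
  obtain T \<mu> where T: "finite T" "T \<subseteq> carrier G"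
    and \<tau>: "\<And>x g. x \<in> config G A \<Longrightarrow> g \<in> carrier G \<Longrightarrow> \<tau> x g = \<mu> (\<lambda>k\<in>T. x (g \<otimes>\<^bsub>G\<^esub> k))"
    using G.is_CA_local_rule[OF assms(5)] by blast
  obtain x0 y0 h0 where x0: "x0 \<in> config G A" and y0: "y0 \<in> config G A"
    and h0: "h0 \<in> carrier H" "\<tau> x0 (\<phi> h0) \<noteq> \<tau> y0 (\<phi> h0)"
    using assms(8) unfolding pullback_def by (metis restrict_ext)
  define p where "p = (\<lambda>k\<in>T. x0 (\<phi> h0 \<otimes>\<^bsub>G\<^esub> k))"
  define q where "q = (\<lambda>k\<in>T. y0 (\<phi> h0 \<otimes>\<^bsub>G\<^esub> k))"
  have "\<mu> p \<noteq> \<mu> q"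
    using h0(2) \<tau>[OF x0 \<phi>[OF h0(1)]] \<tau>[OF y0 \<phi>[OF h0(1)]] by (simp add: p_def q_def)
  obtain h where h: "h \<in> carrier H" "inv\<^bsub>G\<^esub> \<psi> h \<otimes>\<^bsub>G\<^esub> \<phi> h \<notin> T <#>\<^bsub>G\<^esub> set_inv\<^bsub>G\<^esub> T"
    using diff_set_avoids_finite[OF assms(9) finite_set_mult_set_inv[OF T(1)]] by blast
  have "A \<noteq> {}" \<comment> \<open>all that is used of \<open>A\<close>\<close>
    using assms(4) by auto
  then obtain x where x: "x \<in> config G A"
    and "(\<lambda>k\<in>T. x (\<phi> h \<otimes>\<^bsub>G\<^esub> k)) = p" "(\<lambda>k\<in>T. x (\<psi> h \<otimes>\<^bsub>G\<^esub> k)) = q"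
    using G.glue_windows[OF T(2) \<phi>[OF h(1)] \<psi>[OF h(1)]
        G.l_cosets_disjoint[OF T(2) \<phi>[OF h(1)] \<psi>[OF h(1)] h(2)]]
      G.window_in_PiE[OF x0 \<phi>[OF h0(1)] T(2)] G.window_in_PiE[OF y0 \<phi>[OF h0(1)] T(2)]
    unfolding p_def q_def by blast
  with \<open>\<mu> p \<noteq> \<mu> q\<close> have "\<tau> x (\<phi> h) \<noteq> \<tau> x (\<psi> h)"
    using \<tau>[OF x \<phi>[OF h(1)]] \<tau>[OF x \<psi>[OF h(1)]] by simp
  then show ?thesis
    using x h(1) by (auto simp: pullback_def fun_eq_iff)
qed

end
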